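(* Let $K$ be a field, $T$ a subgroup of $K^\times$, and suppose the factor hyperfield $F=K_T$ admits a Krasner valuation $w$. Then there exist a valuation $v$ on $K$ with $vK=wF$ and an initial segment $\rho$ of $vK$ containing $0$ such that $T=1+\mathcal{M}_v^\rho:=\{x\in K: v(x-1)\notin\rho\}$ (so $F=K_\rho:=K_{1+\mathcal{M}_v^\rho}$) and $w=v_\rho$, where $v_\rho(xT):=vx$.
   Context: A hyperfield is $(F,+,\cdot,0,1)$ with $+$ a multivalued operation making $(F,+,0)$ a canonical hypergroup (associative, commutative, unique inverses $-x$ with $0\in x+(-x)$, and $z\in x+y\Rightarrow y\in z+(-x)$; write $x-y:=x+(-y)$ and $A+B:=\bigcup_{a\in A,b\in B}a+b$), $(F,\cdot)$ commutative with $0$ absorbing, $x(y+z)=xy+xz$, and $F\setminus\{0\}$ an abelian group with neutral $1\neq0$. Valuation on a hyperfield $F$: for an ordered abelian group $\Gamma$ and $\infty>\Gamma$ with $\gamma+\infty=\infty+\gamma=\infty$, a surjective map $v:F\to\Gamma\cup\{\infty\}$ with $vx=\infty\iff x=0$, $v(xy)=vx+vy$, $z\in x+y\Rightarrow vz\ge\min\{vx,vy\}$; $vF:=v(F\setminus\{0\})$. Fields are hyperfields with singleton sums. Factor hyperfield: for a field $K$ and a subgroup $T\le K^\times$, $K_T$ is the set of cosets $xT$ with $xT+yT:=\{(x+yt)T:t\in T\}$, $xT\cdot yT=xyT$. An initial segment of an ordered set $\Gamma$ is $\rho\subseteq\Gamma$ with $\delta\in\rho,\gamma<\delta\Rightarrow\gamma\in\rho$.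 For $\gamma\in\Gamma$, $\rho+\gamma:=\{\delta+\gamma:\delta\in\rho\}$, and for $\alpha\in\Gamma\cup\{\infty\}$, "$\alpha>\rho+\gamma$" means $\alpha\notin\rho+\gamma$. Krasner valuation: a valuation $v$ on a hyperfield $F$ such that (KVH1) for all $x,y\in F$ with $0\notin x+y$, the set $v(x+y)$ is a singleton; (KVH2) there is an initial segment $\rho_v$ of $vF$ with $0\in\rho_v$ (the norm) such that for all $x,y,z,t\in F$ with $z\in x+y$: $t\in x+y$ iff $vs>\rho_v+\min\{vx,vy\}$ for all $s\in z-t$. *)

theory Defs
  imports Main
begin

record 'b hyperfield =
  hf_carrier :: "'b set"
  hf_add :: "'b \<Rightarrow> 'b \<Rightarrow> 'b set"
  hf_mult :: "'b \<Rightarrow> 'b \<Rightarrow> 'b"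
  hf_zero :: 'b
  hf_one :: 'b
  hf_neg :: "'b \<Rightarrow> 'b"

definition hf_minus :: "('b, 'm) hyperfield_scheme \<Rightarrow> 'b \<Rightarrow> 'b \<Rightarrow> 'b set" where
  "hf_minus F x y = hf_add F x (hf_neg F y)"

text \<open>Gamma \<union> {\<infinity>} is rendered as 'g option, None = \<infinity>.\<close>
definition oadd :: "'g::linordered_ab_group_add option \<Rightarrow> 'g option \<Rightarrow> 'g option" where
  "oadd a b = (case a of None \<Rightarrow> None | Some x \<Rightarrow> (case b of None \<Rightarrow> None | Some y \<Rightarrow> Some (x + y)))"

definition ole :: "'g::linordered_ab_group_add option \<Rightarrow> 'g option \<Rightarrow> bool" where
  "ole a b = (case b of None \<Rightarrow> True | Some y \<Rightarrow> (case a of None \<Rightarrow> False | Some x \<Rightarrow> x \<le> y))"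

definition omin :: "'g::linordered_ab_group_add option \<Rightarrow> 'g option \<Rightarrow> 'g option" where
  "omin a b = (if ole a b then a else b)"

definition hf_valuation ::
  "('b, 'm) hyperfield_scheme \<Rightarrow> ('b \<Rightarrow> 'g::linordered_ab_group_add option) \<Rightarrow> bool" where
  "hf_valuation F v \<longleftrightarrow>
     v ` hf_carrier F = UNIV \<and>
     (\<forall>x\<in>hf_carrier F. v x = None \<longleftrightarrow> x = hf_zero F) \<and>
     (\<forall>x\<in>hf_carrier F. \<forall>y\<in>hf_carrier F. v (hf_mult F x y) = oadd (v x) (v y)) \<and>
     (\<forall>x\<in>hf_carrier F. \<forall>y\<in>hf_carrier F. \<forall>z\<in>hf_add F x y. ole (omin (v x) (v y)) (v z))"

definition value_group ::
  "('b, 'm) hyperfield_scheme \<Rightarrow> ('b \<Rightarrow> 'g::linordered_ab_group_add option) \<Rightarrow> 'g set" where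
  "value_group F v = {g. \<exists>x\<in>hf_carrier F - {hf_zero F}. v x = Some g}"

definition initial_segment :: "'g::linorder set \<Rightarrow> 'g set \<Rightarrow> bool" where
  "initial_segment S \<rho> \<longleftrightarrow> \<rho> \<subseteq> S \<and> (\<forall>\<delta>\<in>\<rho>. \<forall>\<gamma>\<in>S. \<gamma> < \<delta> \<longrightarrow> \<gamma> \<in> \<rho>)"

text \<open>"alpha > rho + gamma", i.e. alpha \<notin> rho + gamma.  For gamma = \<infinity> we read rho + \<infinity> as
  the whole of Gamma (the cut just below \<infinity>), so the condition means alpha = \<infinity>.\<close>
definition above_seg :: "'g::linordered_ab_group_add set \<Rightarrow> 'g option \<Rightarrow> 'g option \<Rightarrow> bool" where
  "above_seg \<rho> \<gamma> \<alpha> = (case \<gamma> of None \<Rightarrow> \<alpha> = None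
                           | Some g \<Rightarrow> \<alpha> \<notin> Some ` ((\<lambda>d. d + g) ` \<rho>))"

definition krasner_valuation ::
  "('b, 'm) hyperfield_scheme \<Rightarrow> ('b \<Rightarrow> 'g::linordered_ab_group_add option) \<Rightarrow> bool" where
  "krasner_valuation F v \<longleftrightarrow>
     hf_valuation F v \<and>
     (\<forall>x\<in>hf_carrier F. \<forall>y\<in>hf_carrier F. hf_zero F \<notin> hf_add F x y \<longrightarrow>
         (\<exists>a. v ` hf_add F x y = {a})) \<and>
     (\<exists>\<rho>. initial_segment (value_group F v) \<rho> \<and> 0 \<in> \<rho> \<and>
        (\<forall>x\<in>hf_carrier F. \<forall>y\<in>hf_carrier F. \<forall>z\<in>hf_carrier F. \<forall>t\<in>hf_carrier F.
           z \<in> hf_add F x y \<longrightarrow>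
           (t \<in> hf_add F x y \<longleftrightarrow>
              (\<forall>s\<in>hf_minus F z t. above_seg \<rho> (omin (v x) (v y)) (v s)))))"

definition field_hf :: "'a::field hyperfield" where
  "field_hf = \<lparr>hf_carrier = UNIV, hf_add = (\<lambda>x y. {x + y}), hf_mult = (*),
               hf_zero = 0, hf_one = 1, hf_neg = uminus\<rparr>"

definition units_subgroup :: "'a::field set \<Rightarrow> bool" where
  "units_subgroup T \<longleftrightarrow> T \<subseteq> - {0} \<and> 1 \<in> T \<and> (\<forall>a\<in>T. \<forall>b\<in>T. a * b \<in> T) \<and>
     (\<forall>a\<in>T. inverse a \<in> T)"

definition coset :: "'a::field set \<Rightarrow> 'a \<Rightarrow> 'a set" where
  "coset T x = (\<lambda>t. x * t) ` T"

text \<open>Factor hyperfield K_T.  xT + yT = {(x + y t)T : t \<in> T}, written representative-free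
  as {(a + b)T : a \<in> xT, b \<in> yT} (same set); xT * yT = xyT, written as the set product.\<close>
definition factor_hf :: "'a::field set \<Rightarrow> 'a set hyperfield" where
  "factor_hf T = \<lparr>hf_carrier = range (coset T),
     hf_add = (\<lambda>A B. {coset T (a + b) | a b. a \<in> A \<and> b \<in> B}),
     hf_mult = (\<lambda>A B. {a * b | a b. a \<in> A \<and> b \<in> B}),
     hf_zero = coset T 0, hf_one = coset T 1, hf_neg = (\<lambda>A. uminus ` A)\<rparr>"

end

theory Submission
  imports Defs
begin

text \<open>Pulling \<open>w\<close> back along \<open>x \<mapsto> xT\<close> gives a valuation \<open>v\<close> on \<open>K\<close> that is constant on
  cosets, so \<open>w = v\<^sub>\<rho>\<close> and \<open>vK = wF\<close> hold by construction.  Applying the Krasner axiom to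
  \<open>T \<in> T + 0T\<close> shows that \<open>c \<in> T\<close> exactly when every element of \<open>T - cT\<close> has value
  above \<open>\<rho>\<close>.  Taking representatives \<open>1 - c\<close> gives \<open>T \<subseteq> 1 + \<M>\<^sub>v\<^sup>\<rho>\<close>; conversely, if
  \<open>v(c - 1) > \<rho>\<close> then \<open>s - ct = (s - t) + t(1 - c)\<close> is a sum of two elements above \<open>\<rho>\<close>,
  hence above \<open>\<rho>\<close> by the ultrametric inequality.\<close>

lemma units_subgroup_nonzero: "units_subgroup T \<Longrightarrow> t \<in> T \<Longrightarrow> t \<noteq> 0"
  unfolding units_subgroup_def by auto

lemma units_subgroup_divide: "units_subgroup T \<Longrightarrow> s \<in> T \<Longrightarrow> t \<in> T \<Longrightarrow> s / t \<in> T"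
  unfolding units_subgroup_def by (simp add: divide_inverse)

lemma mem_coset_self: "units_subgroup T \<Longrightarrow> x \<in> coset T x"
  unfolding units_subgroup_def coset_def by (metis image_eqI mult_1_right)

lemma coset_one [simp]: "coset T 1 = T"
  unfolding coset_def by simp

lemma coset_zero: "units_subgroup T \<Longrightarrow> coset T 0 = {0}"
  unfolding units_subgroup_def coset_def by auto

lemma coset_eq_zero_iff: "units_subgroup T \<Longrightarrow> coset T x = coset T 0 \<longleftrightarrow> x = 0"
  using mem_coset_self coset_zero by fastforce

lemma coset_eq_self_iff:
  assumes T: "units_subgroup T"
  shows "coset T c = T \<longleftrightarrow> c \<in> T"
proof
  assume "coset T c = T"
  then show "c \<in> T" using mem_coset_self[OF T] by blast
next
  assume c: "c \<in> T"
  have "t = c * (t / c)" for t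
    using units_subgroup_nonzero[OF T c] by simp
  then have "T \<subseteq> coset T c"
    using units_subgroup_divide[OF T _ c] unfolding coset_def by blast
  moreover have "coset T c \<subseteq> T"
    using T c unfolding units_subgroup_def coset_def by auto
  ultimately show "coset T c = T" by blast
qed

lemma set_times_coset:
  assumes T: "units_subgroup T"
  shows "{a * b | a b. a \<in> coset T x \<and> b \<in> coset T y} = coset T (x * y)"
proof (intro equalityI subsetI)
  fix z assume "z \<in> {a * b | a b. a \<in> coset T x \<and> b \<in> coset T y}"
  then obtain s t where "s \<in> T" "t \<in> T" "z = (x * y) * (s * t)"
    unfolding coset_def by (auto simp: ac_simps)
  then show "z \<in> coset T (x * y)"
    using T unfolding units_subgroup_def coset_def by blast
next
  fix z assume "z \<in> coset T (x * y)"
  then obtain t where "t \<in> T" "z = (x * t) * y"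
    unfolding coset_def by (auto simp: ac_simps)
  then show "z \<in> {a * b | a b. a \<in> coset T x \<and> b \<in> coset T y}"
    using mem_coset_self[OF T, of y] unfolding coset_def by blast
qed

lemma uminus_coset: "uminus ` coset T c = coset T (- c)"
  unfolding coset_def by (auto simp: image_image)

lemma factor_hf_add_coset:
  "hf_add (factor_hf T) (coset T x) (coset T y) = {coset T (x * s + y * t) | s t. s \<in> T \<and> t \<in> T}"
proof -
  have "hf_add (factor_hf T) (coset T x) (coset T y) =
        {coset T (a + b) | a b. a \<in> coset T x \<and> b \<in> coset T y}"
    by (simp add: factor_hf_def)
  also have "\<dots> = {coset T (x * s + y * t) | s t. s \<in> T \<and> t \<in> T}"
    unfolding coset_def by blast
  finally show ?thesis .
qed

lemma factor_hf_add_coset_mem: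
  assumes "units_subgroup T"
  shows "coset T (x + y) \<in> hf_add (factor_hf T) (coset T x) (coset T y)"
proof -
  have "1 \<in> T" using assms by (simp add: units_subgroup_def)
  then show ?thesis
    unfolding factor_hf_add_coset by (intro CollectI exI[of _ 1]) simp
qed

lemma factor_hf_add_zero:
  "units_subgroup T \<Longrightarrow> hf_add (factor_hf T) A (coset T 0) = coset T ` A"
  unfolding factor_hf_def by (auto simp: coset_zero)

lemma factor_hf_minus_coset:
  "hf_minus (factor_hf T) (coset T x) (coset T y) = {coset T (x * s - y * t) | s t. s \<in> T \<and> t \<in> T}"
proof -
  have "hf_minus (factor_hf T) (coset T x) (coset T y) = hf_add (factor_hf T) (coset T x) (coset T (- y))"
    unfolding hf_minus_def by (simp add: factor_hf_def uminus_coset)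
  then show ?thesis
    by (simp add: factor_hf_add_coset)
qed

lemma value_group_eq_UNIV:
  assumes "hf_valuation F v"
  shows "value_group F v = UNIV"
proof -
  have "g \<in> value_group F v" for g
  proof -
    obtain x where x: "x \<in> hf_carrier F" "v x = Some g"
      using assms unfolding hf_valuation_def by (metis UNIV_I imageE)
    then have "x \<noteq> hf_zero F"
      using assms unfolding hf_valuation_def by auto
    with x show ?thesis
      unfolding value_group_def by blast
  qed
  then show ?thesis by blast
qed

lemma hf_valuation_factor_hf_pullback:
  assumes T: "units_subgroup T" and w: "hf_valuation (factor_hf T) w"
  shows "hf_valuation field_hf (\<lambda>x. w (coset T x))"
proof -
  have carrier: "hf_carrier (factor_hf T) = range (coset T)"
    by (simp add: factor_hf_def)
  have "range (\<lambda>x. w (coset T x)) = UNIV"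
    using w carrier unfolding hf_valuation_def by (simp add: image_comp)
  moreover have "w (coset T x) = None \<longleftrightarrow> x = 0" for x
    using w coset_eq_zero_iff[OF T]
    unfolding hf_valuation_def by (simp add: carrier factor_hf_def)
  moreover have "w (coset T (x * y)) = oadd (w (coset T x)) (w (coset T y))" for x y
    using w set_times_coset[OF T]
    unfolding hf_valuation_def by (simp add: carrier factor_hf_def)
  moreover have "ole (omin (w (coset T x)) (w (coset T y))) (w (coset T (x + y)))" for x y
    using w factor_hf_add_coset_mem[OF T] unfolding hf_valuation_def by (simp add: carrier)
  ultimately show ?thesis
    unfolding hf_valuation_def field_hf_def by simp
qed

context
  fixes v :: "'a::field \<Rightarrow> 'g::linordered_ab_group_add option"
  assumes v: "hf_valuation field_hf v"
begin

lemma field_valuation_eq_None_iff: "v x = None \<longleftrightarrow> x = 0"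
  using v unfolding hf_valuation_def field_hf_def by simp

lemma field_valuation_mult: "v (x * y) = oadd (v x) (v y)"
  using v unfolding hf_valuation_def field_hf_def by simp

lemma field_valuation_add: "ole (omin (v x) (v y)) (v (x + y))"
  using v unfolding hf_valuation_def field_hf_def by simp

lemma field_valuation_one: "v 1 = Some 0"
proof -
  obtain g where g: "v 1 = Some g"
    using field_valuation_eq_None_iff by (cases "v 1") auto
  then have "g = g + g"
    using field_valuation_mult[of 1 1] by (simp add: oadd_def)
  then show ?thesis using g by simp
qed

lemma field_valuation_mult_unit: "v u = Some 0 \<Longrightarrow> v (u * x) = v x"
  by (simp add: field_valuation_mult oadd_def split: option.split)

text \<open>\<open>v(-1)\<close> is an element of order at most two in a torsion-free group.\<close>
lemma field_valuation_minus_one: "v (- 1) = Some 0"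
proof -
  obtain g where g: "v (- 1) = Some g"
    using field_valuation_eq_None_iff by (cases "v (- 1)") auto
  then have "g + g = 0"
    using field_valuation_mult[of "- 1" "- 1"] field_valuation_one by (simp add: oadd_def)
  then have "g = 0"
    by (metis add_neg_neg add_pos_pos less_irrefl linorder_neqE)
  then show ?thesis using g by simp
qed

lemma field_valuation_minus_commute: "v (x - y) = v (y - x)"
  using field_valuation_mult_unit[OF field_valuation_minus_one, of "y - x"] by simp

lemma field_valuation_add_above:
  assumes "initial_segment UNIV \<rho>" and "v x \<notin> Some ` \<rho>" and "v y \<notin> Some ` \<rho>"
  shows "v (x + y) \<notin> Some ` \<rho>"
proof
  assume "v (x + y) \<in> Some ` \<rho>"
  then obtain a where a: "v (x + y) = Some a" "a \<in> \<rho>" by blast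
  have "omin (v x) (v y) \<notin> Some ` \<rho>"
    using assms(2,3) unfolding omin_def by auto
  moreover obtain b where "omin (v x) (v y) = Some b" "b \<le> a"
    using field_valuation_add[of x y] a unfolding ole_def by (cases "omin (v x) (v y)") auto
  ultimately show False
    using assms(1) a(2) unfolding initial_segment_def by (auto simp: order_le_less)
qed

lemma subgroup_eq_one_plus_ideal:
  assumes T: "units_subgroup T"
    and seg: "initial_segment UNIV \<rho>"
    and units: "\<And>u. u \<in> T \<Longrightarrow> v u = Some 0"
    and criterion: "\<And>c. c \<in> T \<longleftrightarrow> (\<forall>s\<in>T. \<forall>t\<in>T. v (s - c * t) \<notin> Some ` \<rho>)"
  shows "T = {x. v (x - 1) \<notin> Some ` \<rho>}"
proof (intro equalityI subsetI CollectI)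
  have T1: "1 \<in> T" using T unfolding units_subgroup_def by simp
  show above: "v (c - 1) \<notin> Some ` \<rho>" if "c \<in> T" for c
  proof -
    have "v (1 - c * 1) \<notin> Some ` \<rho>"
      using criterion[of c] that T1 by blast
    then show ?thesis using field_valuation_minus_commute[of c 1] by simp
  qed
  fix c assume "c \<in> {x. v (x - 1) \<notin> Some ` \<rho>}"
  then have c: "v (c - 1) \<notin> Some ` \<rho>" by simp
  have "v (s - c * t) \<notin> Some ` \<rho>" if s: "s \<in> T" and t: "t \<in> T" for s t
  proof -
    have "v (t * (s / t - 1)) \<notin> Some ` \<rho>"
      using above[OF units_subgroup_divide[OF T s t]] field_valuation_mult_unit[OF units[OF t]]
      by simp
    moreover have "v (t * (1 - c)) \<notin> Some ` \<rho>"
      using c field_valuation_mult_unit[OF units[OF t]] field_valuation_minus_commute[of 1 c]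
      by simp
    ultimately have "v (t * (s / t - 1) + t * (1 - c)) \<notin> Some ` \<rho>"
      by (rule field_valuation_add_above[OF seg])
    moreover have "t * (s / t - 1) + t * (1 - c) = s - c * t"
      using units_subgroup_nonzero[OF T t] by (simp add: algebra_simps)
    ultimately show ?thesis by simp
  qed
  then show "c \<in> T" using criterion by blast
qed

end

lemma krasner_valuation_imp_hf_valuation: "krasner_valuation F w \<Longrightarrow> hf_valuation F w"
  unfolding krasner_valuation_def by (elim conjE)

lemma krasner_valuation_factor_hf_criterion:
  assumes T: "units_subgroup T" and w: "krasner_valuation (factor_hf T) w"
  obtains \<rho> where "initial_segment (value_group (factor_hf T) w) \<rho>" "0 \<in> \<rho>"
    "\<And>c. c \<in> T \<longleftrightarrow> (\<forall>s\<in>T. \<forall>t\<in>T. w (coset T (s - c * t)) \<notin> Some ` \<rho>)"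
proof -
  let ?F = "factor_hf T"
  obtain \<rho> where seg: "initial_segment (value_group ?F w) \<rho>" and "0 \<in> \<rho>"
    and norm: "\<forall>x\<in>hf_carrier ?F. \<forall>y\<in>hf_carrier ?F. \<forall>z\<in>hf_carrier ?F. \<forall>t\<in>hf_carrier ?F.
           z \<in> hf_add ?F x y \<longrightarrow>
           (t \<in> hf_add ?F x y \<longleftrightarrow> (\<forall>s\<in>hf_minus ?F z t. above_seg \<rho> (omin (w x) (w y)) (w s)))"
    using w unfolding krasner_valuation_def by blast
  have v: "hf_valuation field_hf (\<lambda>x. w (coset T x))"
    by (rule hf_valuation_factor_hf_pullback[OF T krasner_valuation_imp_hf_valuation[OF w]])
  have "hf_add ?F T (coset T 0) = (\<lambda>_. T) ` T"
    unfolding factor_hf_add_zero[OF T] by (rule image_cong) (simp_all add: coset_eq_self_iff[OF T])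
  also have "\<dots> = {T}"
    using T unfolding units_subgroup_def by (blast intro: image_constant)
  finally have sum: "hf_add ?F T (coset T 0) = {T}" .
  have omin: "omin (w T) (w (coset T 0)) = Some 0"
    using field_valuation_one[OF v] field_valuation_eq_None_iff[OF v, of 0]
    by (simp add: omin_def ole_def)
  have carrier: "coset T x \<in> hf_carrier ?F" for x
    by (simp add: factor_hf_def)
  \<comment> \<open>the Krasner axiom for \<open>x = z = T\<close>, \<open>y = 0T\<close> and \<open>t = cT\<close>\<close>
  have krasner: "coset T c = T \<longleftrightarrow> (\<forall>s\<in>hf_minus ?F T (coset T c). w s \<notin> Some ` \<rho>)" for c
    using norm[rule_format, OF carrier[of 1] carrier[of 0] carrier[of 1] carrier[of c]] sum omin
    by (simp add: above_seg_def)
  have "c \<in> T \<longleftrightarrow> (\<forall>s\<in>T. \<forall>t\<in>T. w (coset T (s - c * t)) \<notin> Some ` \<rho>)" for c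
  proof -
    have "c \<in> T \<longleftrightarrow> coset T c = T"
      by (rule coset_eq_self_iff[OF T, symmetric])
    also have "\<dots> \<longleftrightarrow> (\<forall>s\<in>hf_minus ?F T (coset T c). w s \<notin> Some ` \<rho>)"
      by (rule krasner)
    also have "hf_minus ?F T (coset T c) = {coset T (s - c * t) | s t. s \<in> T \<and> t \<in> T}"
      using factor_hf_minus_coset[of T 1 c] by simp
    finally show ?thesis by blast
  qed
  with seg \<open>0 \<in> \<rho>\<close> show ?thesis using that by blast
qed

theorem mainTheorem8:
  fixes T :: "'a::field set"
    and w :: "'a set \<Rightarrow> 'g::linordered_ab_group_add option"
  assumes "units_subgroup T"
    and "krasner_valuation (factor_hf T) w"
  shows "\<exists>(v :: 'a \<Rightarrow> 'g option) \<rho>.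
           hf_valuation field_hf v \<and>
           value_group field_hf v = value_group (factor_hf T) w \<and>
           initial_segment (value_group field_hf v) \<rho> \<and> 0 \<in> \<rho> \<and>
           T = {x. v (x - 1) \<notin> Some ` \<rho>} \<and>
           (\<forall>x. w (coset T x) = v x)"
proof -
  have w: "hf_valuation (factor_hf T) w"
    using assms(2) by (rule krasner_valuation_imp_hf_valuation)
  define v where "v = (\<lambda>x. w (coset T x))"
  have v: "hf_valuation field_hf v"
    unfolding v_def by (rule hf_valuation_factor_hf_pullback[OF assms(1) w])
  obtain \<rho> where seg: "initial_segment (value_group (factor_hf T) w) \<rho>" and "0 \<in> \<rho>"
    and criterion: "\<And>c. c \<in> T \<longleftrightarrow> (\<forall>s\<in>T. \<forall>t\<in>T. v (s - c * t) \<notin> Some ` \<rho>)"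
    unfolding v_def by (rule krasner_valuation_factor_hf_criterion[OF assms]) blast
  have groups: "value_group field_hf v = value_group (factor_hf T) w"
    using value_group_eq_UNIV[OF v] value_group_eq_UNIV[OF w] by simp
  have units: "v u = Some 0" if "u \<in> T" for u
    using field_valuation_one[OF v] coset_eq_self_iff[OF assms(1), THEN iffD2, OF that]
    by (simp add: v_def)
  have "initial_segment UNIV \<rho>"
    using seg value_group_eq_UNIV[OF w] by simp
  then have one_plus_ideal: "T = {x. v (x - 1) \<notin> Some ` \<rho>}"
    by (rule subgroup_eq_one_plus_ideal[OF v assms(1) _ _ criterion]) (erule units)
  show ?thesis
  proof (intro exI[of _ v] exI[of _ \<rho>] conjI)
    show "initial_segment (value_group field_hf v) \<rho>"
      using seg groups by simp
    show "\<forall>x. w (coset T x) = v x"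
      by (simp add: v_def)
  qed (fact v groups one_plus_ideal \<open>0 \<in> \<rho>\<close>)+
qed

end
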